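(* Let $G$ be an extraspecial $p$-group of order $p^{2n+1}$ ($p$ prime, $n\ge1$). Then $$A_G(t)=\frac{1}{p^{2n+1}}\left(\frac{p}{1-p^{2n+1}t}+\frac{p^{2n+1}-p}{1-p^{2n}t}\right).$$
   Context: A finite $p$-group $G$ is extraspecial if $Z(G)=G'$ has order $p$ and $G/Z(G)$ is elementary abelian. For a finite group $G$ and $n\ge0$, let $\alpha_{G,n}$ be the number of orbits of $G$ acting on $G^n$ by simultaneous conjugation, and $A_G(t)=\sum_{n\ge0}\alpha_{G,n}t^n$. *)

theory Defs
  imports "HOL-Algebra.Algebra" "HOL-Computational_Algebra.Formal_Power_Series"
begin

definition group_center :: "('a, 'b) monoid_scheme \<Rightarrow> 'a set" where
  "group_center G = {z \<in> carrier G. \<forall>x \<in> carrier G. z \<otimes>\<^bsub>G\<^esub> x = x \<otimes>\<^bsub>G\<^esub> z}"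

definition elementary_abelian :: "('a, 'b) monoid_scheme \<Rightarrow> nat \<Rightarrow> bool" where
  "elementary_abelian H p \<longleftrightarrow> comm_group H \<and> finite (carrier H) \<and>
     (\<forall>x \<in> carrier H. x [^]\<^bsub>H\<^esub> p = \<one>\<^bsub>H\<^esub>)"

definition extraspecial :: "('a, 'b) monoid_scheme \<Rightarrow> nat \<Rightarrow> bool" where
  "extraspecial G p \<longleftrightarrow> group G \<and> finite (carrier G) \<and>
     (\<exists>k. card (carrier G) = p ^ k) \<and>
     group_center G = derived G (carrier G) \<and>
     card (group_center G) = p \<and>
     elementary_abelian (G Mod group_center G) p"

definition sim_conj :: "('a, 'b) monoid_scheme \<Rightarrow> 'a \<Rightarrow> 'a list \<Rightarrow> 'a list" where
  "sim_conj G g xs = map (\<lambda>x. g \<otimes>\<^bsub>G\<^esub> x \<otimes>\<^bsub>G\<^esub> inv\<^bsub>G\<^esub> g) xs"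

definition tuples :: "('a, 'b) monoid_scheme \<Rightarrow> nat \<Rightarrow> 'a list set" where
  "tuples G m = {xs. length xs = m \<and> set xs \<subseteq> carrier G}"

definition alpha :: "('a, 'b) monoid_scheme \<Rightarrow> nat \<Rightarrow> nat" where
  "alpha G m = card (orbits G (tuples G m) (sim_conj G))"

definition A_series :: "('a, 'b) monoid_scheme \<Rightarrow> real fps" where
  "A_series G = Abs_fps (\<lambda>m. real (alpha G m))"

end

theory Submission
  imports Defs
begin

text \<open>
  Burnside's lemma for the action of \<open>G\<close> on \<open>G\<^sup>m\<close> by simultaneous conjugation gives
  \<open>\<alpha>\<^sub>m |G| = \<Sum>\<^sub>g |C(g)|\<^sup>m\<close>, since the tuples fixed by \<open>g\<close> are those with all entries in the
  centralizer \<open>C(g)\<close>. For a non-central \<open>g\<close>, every conjugate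
  \<open>h g h\<^sup>-\<^sup>1 = g [g\<^sup>-\<^sup>1, h]\<close> lies in the coset \<open>g G'\<close>, so the conjugacy class of \<open>g\<close> has at most
  \<open>|G'| = p\<close> elements; as a nontrivial divisor of the \<open>p\<close>-power \<open>|G|\<close> it has exactly \<open>p\<close>, i.e.
  \<open>|C(g)| = |G|/p\<close>. Hence \<open>\<alpha>\<^sub>m\<close> is a combination of two geometric sequences.
  Besides the order of \<open>G\<close>, only \<open>Z(G) = G'\<close> of order \<open>p\<close> is used; neither \<open>n \<ge> 1\<close>
  nor the exponent of \<open>G/Z(G)\<close> matters.
\<close>

lemma fps_inverse_one_minus_const_X:
  fixes c :: "'a::field"
  shows "inverse (1 - fps_const c * fps_X) = Abs_fps (\<lambda>m. c ^ m)"
proof (rule fps_inverse_unique)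
  show "(1 - fps_const c * fps_X) * Abs_fps (\<lambda>m. c ^ m) = 1"
  proof (rule fps_ext)
    fix k
    show "fps_nth ((1 - fps_const c * fps_X) * Abs_fps (\<lambda>m. c ^ m)) k = fps_nth 1 k"
      by (cases k) (simp_all add: ring_distribs mult.assoc fps_mult_left_const_nth)
  qed
qed

lemma Abs_fps_sum_of_two_geometric:
  fixes c a b r s :: "'a::field"
  shows "Abs_fps (\<lambda>m. c * (a * r ^ m + b * s ^ m)) =
    fps_const c * (fps_const a * inverse (1 - fps_const r * fps_X)
      + fps_const b * inverse (1 - fps_const s * fps_X))"
  by (simp add: fps_eq_iff fps_inverse_one_minus_const_X fps_mult_left_const_nth)

lemma orbits_restrict: "orbits G E (\<lambda>g. restrict (\<phi> g) E) = orbits G E \<phi>"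
  unfolding orbits_def orbit_def by auto

lemma (in group) group_actionI:
  assumes closed: "\<And>g. g \<in> carrier G \<Longrightarrow> \<psi> g \<in> E \<rightarrow> E"
    and one: "\<And>x. x \<in> E \<Longrightarrow> \<psi> \<one> x = x"
    and mult: "\<And>g h x. \<lbrakk>g \<in> carrier G; h \<in> carrier G; x \<in> E\<rbrakk> \<Longrightarrow> \<psi> (g \<otimes> h) x = \<psi> g (\<psi> h x)"
  shows "group_action G E (\<lambda>g. restrict (\<psi> g) E)"
proof -
  let ?\<phi> = "\<lambda>g. restrict (\<psi> g) E"
  have bij: "?\<phi> g \<in> Bij E" if g: "g \<in> carrier G" for g
  proof -
    have "bij_betw (?\<phi> g) E E"
    proof (rule bij_betwI[where g = "?\<phi> (inv g)"])
      show "?\<phi> g \<in> E \<rightarrow> E" "?\<phi> (inv g) \<in> E \<rightarrow> E"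
        using g closed by auto
      show "?\<phi> (inv g) (?\<phi> g x) = x" "?\<phi> g (?\<phi> (inv g) x) = x" if "x \<in> E" for x
        using that g closed mult[of "inv g" g x] mult[of g "inv g" x] one[of x] by auto
    qed
    then show ?thesis by (simp add: Bij_def)
  qed
  have "?\<phi> \<in> hom G (BijGroup E)"
  proof (rule homI)
    show "?\<phi> g \<in> carrier (BijGroup E)" if "g \<in> carrier G" for g
      using bij[OF that] by (simp add: BijGroup_def)
    show "?\<phi> (g \<otimes> h) = ?\<phi> g \<otimes>\<^bsub>BijGroup E\<^esub> ?\<phi> h"
      if "g \<in> carrier G" "h \<in> carrier G" for g h
      using that bij closed[OF that(2)] mult by (auto simp: BijGroup_def compose_def intro!: ext)
  qed
  then show ?thesis
    by (simp add: group_action_def group_hom_def group_hom_axioms_def group_BijGroup is_group)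
qed

lemma dvd_prime_power_eq_prime:
  fixes p d :: nat
  assumes "Factorial_Ring.prime p" "d dvd p ^ k" "1 < d" "d \<le> p"
  shows "d = p"
proof -
  obtain i where i: "d = p ^ i"
    using assms(1,2) divides_primepow_nat by blast
  have "p < p ^ 2"
    using prime_gt_1_nat[OF assms(1)] by (simp add: power2_eq_square)
  then have "p ^ i < p ^ 2"
    using assms(4) i by linarith
  then have "i < 2"
    using power_less_imp_less_exp prime_gt_1_nat[OF assms(1)] by blast
  moreover have "i \<noteq> 0"
    using assms(3) i by (metis less_irrefl power_0)
  ultimately show ?thesis
    using i by (cases i) auto
qed

context group
begin

definition centralizer :: "'a \<Rightarrow> 'a set" where
  "centralizer g = {x \<in> carrier G. g \<otimes> x = x \<otimes> g}"

abbreviation conjugation :: "'a \<Rightarrow> 'a \<Rightarrow> 'a" where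
  "conjugation g \<equiv> \<lambda>h \<in> carrier G. g \<otimes> h \<otimes> inv g"

lemma conj_eq_self_iff_commute:
  "\<lbrakk>g \<in> carrier G; x \<in> carrier G\<rbrakk> \<Longrightarrow> g \<otimes> x \<otimes> inv g = x \<longleftrightarrow> g \<otimes> x = x \<otimes> g"
  by (simp add: inv_solve_right')

lemma centralizer_eq_carrier: "g \<in> group_center G \<Longrightarrow> centralizer g = carrier G"
  unfolding centralizer_def group_center_def by auto

lemma stabilizer_conjugation: "g \<in> carrier G \<Longrightarrow> stabilizer G conjugation g = centralizer g"
  unfolding stabilizer_def centralizer_def
  by (auto simp: conj_eq_self_iff_commute)

lemma sim_conj_group_action:
  "group_action G (tuples G m) (\<lambda>g. restrict (sim_conj G g) (tuples G m))"
proof (rule group_actionI)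
  show "sim_conj G g \<in> tuples G m \<rightarrow> tuples G m" if "g \<in> carrier G" for g
    using that by (fastforce simp: tuples_def sim_conj_def)
  show "sim_conj G \<one> xs = xs" if "xs \<in> tuples G m" for xs
    using that by (auto simp: tuples_def sim_conj_def intro!: map_idI)
  show "sim_conj G (g \<otimes> h) xs = sim_conj G g (sim_conj G h xs)"
    if "g \<in> carrier G" "h \<in> carrier G" "xs \<in> tuples G m" for g h xs
    using that by (auto simp: tuples_def sim_conj_def inv_mult_group m_assoc)
qed

lemma invariants_sim_conj:
  assumes "g \<in> carrier G"
  shows "invariants (tuples G m) (\<lambda>g. restrict (sim_conj G g) (tuples G m)) g
    = {xs. set xs \<subseteq> centralizer g \<and> length xs = m}"
proof -
  have "sim_conj G g xs = xs \<longleftrightarrow> set xs \<subseteq> centralizer g" if "set xs \<subseteq> carrier G" for xs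
  proof -
    have "sim_conj G g xs = xs \<longleftrightarrow> (\<forall>x \<in> set xs. g \<otimes> x \<otimes> inv g = x)"
      unfolding sim_conj_def by (induct xs) auto
    also have "\<dots> \<longleftrightarrow> set xs \<subseteq> centralizer g"
      using assms that conj_eq_self_iff_commute[OF assms] by (auto simp: centralizer_def)
    finally show ?thesis .
  qed
  moreover have "centralizer g \<subseteq> carrier G"
    by (auto simp: centralizer_def)
  ultimately show ?thesis
    unfolding invariants_def tuples_def by auto
qed

lemma alpha_mult_order:
  assumes "finite (carrier G)"
  shows "alpha G m * order G = (\<Sum>g \<in> carrier G. card (centralizer g) ^ m)"
proof -
  interpret sim_conj: group_action G "tuples G m" "\<lambda>g. restrict (sim_conj G g) (tuples G m)"
    by (rule sim_conj_group_action)
  have "finite (tuples G m)"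
    using finite_lists_length_eq[OF assms, of m] by (simp add: tuples_def conj_commute)
  then have "alpha G m * order G
      = (\<Sum>g \<in> carrier G. card (invariants (tuples G m) (\<lambda>g. restrict (sim_conj G g) (tuples G m)) g))"
    using sim_conj.burnside[OF assms] by (simp add: alpha_def orbits_restrict)
  also have "\<dots> = (\<Sum>g \<in> carrier G. card (centralizer g) ^ m)"
    using assms by (intro sum.cong) (simp_all add: invariants_sim_conj card_lists_length_eq centralizer_def)
  finally show ?thesis .
qed

lemma conjugation_orbit_subset_coset_derived:
  assumes g: "g \<in> carrier G"
  shows "orbit G conjugation g \<subseteq> (\<lambda>z. g \<otimes> z) ` derived G (carrier G)"
proof
  fix y assume "y \<in> orbit G conjugation g"
  then obtain h where h: "h \<in> carrier G" and y: "y = h \<otimes> g \<otimes> inv h"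
    unfolding orbit_def using g by auto
  have "inv g \<otimes> h \<otimes> inv (inv g) \<otimes> inv h \<in> derived_set G (carrier G)"
    using g h by blast
  then have "inv g \<otimes> h \<otimes> g \<otimes> inv h \<in> derived G (carrier G)"
    unfolding derived_def using g by (auto intro: generate.incl)
  moreover have "y = g \<otimes> (inv g \<otimes> h \<otimes> g \<otimes> inv h)"
    using y g h by (simp add: m_assoc[symmetric])
  ultimately show "y \<in> (\<lambda>z. g \<otimes> z) ` derived G (carrier G)" by blast
qed

lemma card_conjugation_orbit_le_card_derived:
  assumes "finite (carrier G)" "g \<in> carrier G"
  shows "card (orbit G conjugation g) \<le> card (derived G (carrier G))"
proof -
  have "finite (derived G (carrier G))"
    using assms(1) derived_in_carrier finite_subset by blast
  then show ?thesis
    using conjugation_orbit_subset_coset_derived[OF assms(2)]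
    by (meson card_image_le card_mono finite_imageI order_trans)
qed

lemma card_conjugation_orbit_gt_one:
  assumes "finite (carrier G)" "g \<in> carrier G - group_center G"
  shows "1 < card (orbit G conjugation g)"
proof -
  interpret conj: group_action G "carrier G" conjugation
    by (rule action_by_conjugation)
  have g: "g \<in> carrier G" using assms(2) by simp
  obtain x where x: "x \<in> carrier G" "g \<otimes> x \<noteq> x \<otimes> g"
    using assms(2) unfolding group_center_def by auto
  have "x \<otimes> g \<otimes> inv x \<noteq> g"
    using conj_eq_self_iff_commute[OF x(1) g] x(2) by auto
  moreover have "{g, x \<otimes> g \<otimes> inv x} \<subseteq> orbit G conjugation g"
    using conj.orbit_refl[OF g] x g unfolding orbit_def by auto
  moreover have "orbit G conjugation g \<subseteq> carrier G"
    using g unfolding orbit_def by auto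
  ultimately show ?thesis
    using assms(1) card_mono[of "orbit G conjugation g" "{g, x \<otimes> g \<otimes> inv x}"]
    by (simp add: finite_subset)
qed

lemma card_centralizer_mult_prime:
  assumes fin: "finite (carrier G)" and p: "Factorial_Ring.prime p" and ord: "order G = p ^ k"
    and derived: "card (derived G (carrier G)) \<le> p"
    and g: "g \<in> carrier G - group_center G"
  shows "card (centralizer g) * p = order G"
proof -
  interpret conj: group_action G "carrier G" conjugation
    by (rule action_by_conjugation)
  have orbit_stabilizer: "card (orbit G conjugation g) * card (centralizer g) = order G"
    using conj.orbit_stabilizer_theorem g stabilizer_conjugation by auto
  have "card (orbit G conjugation g) = p"
  proof (rule dvd_prime_power_eq_prime[OF p])
    show "card (orbit G conjugation g) dvd p ^ k"
      unfolding ord[symmetric] orbit_stabilizer[symmetric] by (rule dvd_triv_left)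
    show "1 < card (orbit G conjugation g)"
      using card_conjugation_orbit_gt_one[OF fin g] .
    show "card (orbit G conjugation g) \<le> p"
      using le_trans[OF card_conjugation_orbit_le_card_derived[OF fin] derived] g by blast
  qed
  then show ?thesis
    using orbit_stabilizer by (simp add: mult.commute)
qed

lemma alpha_mult_order_of_derived_eq_center:
  assumes fin: "finite (carrier G)" and p: "Factorial_Ring.prime p" and ord: "order G = p ^ Suc k"
    and Z: "group_center G = derived G (carrier G)" "card (group_center G) = p"
  shows "alpha G m * p ^ Suc k = p * (p ^ Suc k) ^ m + (p ^ Suc k - p) * (p ^ k) ^ m"
proof -
  have Z_subset: "group_center G \<subseteq> carrier G"
    by (auto simp: group_center_def)
  have "card (carrier G - group_center G) = p ^ Suc k - p"
    using Z(2) ord fin Z_subset by (simp add: card_Diff_subset finite_subset order_def)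
  moreover have "card (centralizer g) = p ^ k" if "g \<in> carrier G - group_center G" for g
    using card_centralizer_mult_prime[OF fin p ord _ that] Z ord prime_gt_0_nat[OF p] by simp
  moreover have "card (centralizer g) = p ^ Suc k" if "g \<in> group_center G" for g
    using centralizer_eq_carrier[OF that] ord by (simp add: order_def)
  moreover have "alpha G m * p ^ Suc k
      = (\<Sum>g \<in> carrier G - group_center G. card (centralizer g) ^ m)
        + (\<Sum>g \<in> group_center G. card (centralizer g) ^ m)"
    using alpha_mult_order[OF fin, of m] ord sum.subset_diff[OF Z_subset fin] by simp
  ultimately show ?thesis
    using Z(2) by simp
qed

end

theorem lemma7p7:
  fixes G :: "('a, 'b) monoid_scheme" and p n :: nat
  assumes "Factorial_Ring.prime p" and "n \<ge> 1"
    and "extraspecial G p"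
    and "card (carrier G) = p ^ (2 * n + 1)"
  shows "A_series G =
    fps_const (1 / real p ^ (2 * n + 1)) *
      (fps_const (real p) * inverse (1 - fps_const (real p ^ (2 * n + 1)) * fps_X)
       + fps_const (real p ^ (2 * n + 1) - real p) * inverse (1 - fps_const (real p ^ (2 * n)) * fps_X))"
proof -
  interpret group G
    using assms(3) by (simp add: extraspecial_def)
  have fin: "finite (carrier G)"
    and Z: "group_center G = derived G (carrier G)" "card (group_center G) = p"
    using assms(3) by (auto simp: extraspecial_def)
  have "order G = p ^ Suc (2 * n)"
    using assms(4) by (simp add: order_def)
  note alpha = alpha_mult_order_of_derived_eq_center[OF fin assms(1) this Z]
  have "real (alpha G m) = 1 / real p ^ (2 * n + 1) *
      (real p * (real p ^ (2 * n + 1)) ^ m + (real p ^ (2 * n + 1) - real p) * (real p ^ (2 * n)) ^ m)" for m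
  proof -
    have "p \<le> p ^ Suc (2 * n)"
      using prime_gt_0_nat[OF assms(1)] by (simp add: self_le_power)
    then have "real (alpha G m) * real p ^ (2 * n + 1) =
        real p * (real p ^ (2 * n + 1)) ^ m + (real p ^ (2 * n + 1) - real p) * (real p ^ (2 * n)) ^ m"
      using arg_cong[OF alpha[of m], of real] by (simp add: of_nat_diff)
    then show ?thesis
      using prime_gt_0_nat[OF assms(1)] by (simp add: field_simps)
  qed
  then show ?thesis
    unfolding A_series_def Abs_fps_sum_of_two_geometric[symmetric] by simp
qed

end
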